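(* Let $q$ be a distribution over $[n]$, let $S\subseteq[n]$ be nonempty with $R(q,S)\ge1$, let $0\le\varepsilon_1<\varepsilon_2$ and $\delta>0$. Then \[ \mathsf{SC}(q,\varepsilon_1,\varepsilon_2,\delta)\ \ge\ \frac{4}{q(S)}\cdot \mathsf{SC}\Big(\mathrm{Unif}_{R(q,S)},\ \frac{4\varepsilon_1}{q(S)},\ \frac{4\varepsilon_2}{q(S)},\ \delta\Big). \]
   Context: For a distribution $q$ over a finite domain, $0\le\varepsilon_1<\varepsilon_2$ and $\delta>0$, $\mathsf{SC}(q,\varepsilon_1,\varepsilon_2,\delta)$ denotes the minimum $m$ such that some tester, given $\mathrm{Poi}(m)$ i.i.d. samples (Poissonized sampling) from an unknown distribution $p$ on the same domain and the full description of $q$, correctly distinguishes $\|p-q\|_1\le\varepsilon_1$ from $\|p-q\|_1\ge\varepsilon_2$ with probability at least $1-\delta$ for every such $p$. For $S\subseteq[n]$, $q(S)=\sum_{i\in S}q_i$, $M(q,S)=\max_{i\in S}q_i$ and $R(q,S)=\big\lfloor \frac{q(S)}{2M(q,S)}\big\rfloor$. $\mathrm{Unif}_t$ is the uniform distribution on $[t]$. *)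

theory Defs
  imports "HOL-Probability.Probability"
begin

definition Poi :: "real \<Rightarrow> nat pmf" where
  "Poi m = (if 0 < m then poisson_pmf m else return_pmf 0)"

definition l1dist :: "nat set \<Rightarrow> nat pmf \<Rightarrow> nat pmf \<Rightarrow> real" where
  "l1dist D p q = (\<Sum>i\<in>D. \<bar>pmf p i - pmf q i\<bar>)"

(* Output distribution of a (randomized) tester T fed with Poi(m) i.i.d. samples from p.
   Output True = "close", False = "far". *)
definition tester_out :: "(nat list \<Rightarrow> bool pmf) \<Rightarrow> real \<Rightarrow> nat pmf \<Rightarrow> bool pmf" where
  "tester_out T m p = bind_pmf (Poi m) (\<lambda>N. bind_pmf (replicate_pmf N p) T)"

definition good_tester ::
  "nat set \<Rightarrow> nat pmf \<Rightarrow> real \<Rightarrow> real \<Rightarrow> real \<Rightarrow> real \<Rightarrow> (nat list \<Rightarrow> bool pmf) \<Rightarrow> bool" where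
  "good_tester D q e1 e2 \<delta> m T \<longleftrightarrow>
     (\<forall>p. set_pmf p \<subseteq> D \<longrightarrow>
        (l1dist D p q \<le> e1 \<longrightarrow> measure_pmf.prob (tester_out T m p) {True} \<ge> 1 - \<delta>) \<and>
        (l1dist D p q \<ge> e2 \<longrightarrow> measure_pmf.prob (tester_out T m p) {False} \<ge> 1 - \<delta>))"

definition SC :: "nat set \<Rightarrow> nat pmf \<Rightarrow> real \<Rightarrow> real \<Rightarrow> real \<Rightarrow> real" where
  "SC D q e1 e2 \<delta> = Inf {m. 0 \<le> m \<and> (\<exists>T. good_tester D q e1 e2 \<delta> m T)}"

definition qmass :: "nat pmf \<Rightarrow> nat set \<Rightarrow> real" where
  "qmass q S = (\<Sum>i\<in>S. pmf q i)"

definition Mmax :: "nat pmf \<Rightarrow> nat set \<Rightarrow> real" where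
  "Mmax q S = Max (pmf q ` S)"

definition Rnum :: "nat pmf \<Rightarrow> nat set \<Rightarrow> nat" where
  "Rnum q S = nat \<lfloor>qmass q S / (2 * Mmax q S)\<rfloor>"

definition Unif :: "nat \<Rightarrow> nat pmf" where
  "Unif t = pmf_of_set {1..t}"

end

theory Submission
  imports Defs "HOL-Real_Asymp.Real_Asymp"
begin

text \<open>Let \<open>c = q(S)/4\<close>. From a tester for \<open>q\<close> using \<open>Poi(m)\<close> samples we build a tester for
  \<open>Unif R\<close> using \<open>Poi(c m)\<close> samples. Cut \<open>S\<close> into \<open>R\<close> consecutive blocks according to its
  cumulative mass; as no atom of \<open>S\<close> weighs more than \<open>q(S)/(2R)\<close>, every block has mass at least
  \<open>q(S)/(2R)\<close>. A distribution \<open>p'\<close> on \<open>[R]\<close> is embedded as the mixture which with probability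
  \<open>c\<close> draws a block from \<open>p'\<close> and then a point of it from \<open>q\<close>, and otherwise draws from a filler
  distribution chosen so that \<open>Unif R\<close> is sent to \<open>q\<close>; the filler is nonnegative thanks to the
  lower bound on block masses. Since the blocks are disjoint, the embedding multiplies
  \<open>l\<^sub>1\<close>-distances by exactly \<open>c\<close>. By Poisson thinning, \<open>Poi(m)\<close> samples of the mixture are
  \<open>Poi(c m)\<close> samples of its first component randomly interleaved with independent
  \<open>Poi((1 - c) m)\<close> samples of the filler, which the new tester can generate itself.
  Finally, some tester for \<open>q\<close> must exist at all: comparing the empirical distribution with
  \<open>q\<close> works by Hoeffding's inequality.\<close>

fun sequence_pmf :: "'a pmf list \<Rightarrow> 'a list pmf" where
  "sequence_pmf [] = return_pmf []"
| "sequence_pmf (M # Ms) = bind_pmf M (\<lambda>x. map_pmf ((#) x) (sequence_pmf Ms))"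

lemma replicate_pmf_bind_pmf:
  "replicate_pmf N (bind_pmf p K) = bind_pmf (replicate_pmf N p) (\<lambda>xs. sequence_pmf (map K xs))"
proof (induction N)
  case 0
  then show ?case by (simp add: bind_return_pmf)
next
  case (Suc N)
  show ?case
    by (simp add: Suc bind_assoc_pmf bind_return_pmf map_pmf_def, subst bind_commute_pmf) simp
qed

lemma map_pmf_map_replicate_pmf:
  "map_pmf (map f) (replicate_pmf N p) = replicate_pmf N (map_pmf f p)"
proof (induction N)
  case 0
  then show ?case by simp
next
  case (Suc N)
  have "replicate_pmf (Suc N) (map_pmf f p) = bind_pmf (map_pmf f p) (\<lambda>x.
      bind_pmf (map_pmf (map f) (replicate_pmf N p)) (\<lambda>xs. return_pmf (x # xs)))"
    by (simp only: replicate_pmf.simps Suc.IH)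
  then show ?case by (simp add: map_pmf_def bind_assoc_pmf bind_return_pmf)
qed

lemma pmf_replicate_pmf:
  "pmf (replicate_pmf N p) xs = (if length xs = N then prod_list (map (pmf p) xs) else 0)"
proof (induction N arbitrary: xs)
  case 0
  then show ?case by (cases xs) auto
next
  case (Suc N)
  show ?case
  proof (cases xs)
    case Nil
    then have "xs \<notin> set_pmf (replicate_pmf (Suc N) p)" by (simp add: set_replicate_pmf)
    then show ?thesis using Nil by (simp add: set_pmf_iff del: replicate_pmf.simps)
  next
    case (Cons y ys)
    have "replicate_pmf (Suc N) p = map_pmf (\<lambda>(x, xs). x # xs) (pair_pmf p (replicate_pmf N p))"
      by (simp add: pair_pmf_def map_pmf_def bind_assoc_pmf bind_return_pmf)
    moreover have "inj (\<lambda>(x::'a, xs). x # xs)" by (auto simp: inj_on_def)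
    ultimately have "pmf (replicate_pmf (Suc N) p) xs = pmf (pair_pmf p (replicate_pmf N p)) (y, ys)"
      unfolding Cons using pmf_map_inj'[of "\<lambda>(x, xs). x # xs" _ "(y, ys)"] by simp
    also have "\<dots> = pmf p y * pmf (replicate_pmf N p) ys" by (simp add: pmf_pair)
    finally show ?thesis using Suc Cons by simp
  qed
qed

lemma count_list_True_False: "count_list bs True + count_list bs False = length bs"
  by (induction bs) auto

lemma map_pmf_count_list_replicate_pmf:
  "map_pmf (\<lambda>xs. count_list xs x) (replicate_pmf N p) = binomial_pmf N (pmf p x)"
proof -
  have indicator: "map_pmf (\<lambda>y. y = x) p = bernoulli_pmf (pmf p x)"
  proof (rule pmf_eqI)
    fix b :: bool
    have "measure_pmf.prob p (UNIV - {x}) = 1 - pmf p x"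
      using measure_pmf.prob_compl[of "{x}" p] by (simp add: measure_pmf_single)
    moreover have "(\<lambda>y. y = x) -` {True} = {x}" "(\<lambda>y. y = x) -` {False} = UNIV - {x}" by auto
    ultimately show "pmf (map_pmf (\<lambda>y. y = x) p) b = pmf (bernoulli_pmf (pmf p x)) b"
      by (cases b) (simp_all add: pmf_map measure_pmf_single pmf_le_1)
  qed
  have count: "count_list xs x = (length \<circ> filter id) (map (\<lambda>y. y = x) xs)" for xs
    by (induction xs) auto
  have "binomial_pmf N (pmf p x) =
      map_pmf (length \<circ> filter id) (map_pmf (map (\<lambda>y. y = x)) (replicate_pmf N p))"
    using binomial_pmf_altdef[of "pmf p x" N] indicator
    by (simp add: map_pmf_map_replicate_pmf pmf_le_1)
  also have "\<dots> = map_pmf (\<lambda>xs. count_list xs x) (replicate_pmf N p)"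
    unfolding map_pmf_comp using count by (simp add: o_def)
  finally show ?thesis by simp
qed

section \<open>Poisson thinning\<close>

fun interleave :: "bool list \<Rightarrow> 'a list \<Rightarrow> 'a list \<Rightarrow> 'a list" where
  "interleave [] xs ys = []"
| "interleave (True # bs) xs ys = hd xs # interleave bs (tl xs) ys"
| "interleave (False # bs) xs ys = hd ys # interleave bs xs (tl ys)"

lemma sequence_pmf_map_if:
  "sequence_pmf (map (\<lambda>b. if b then A else B) bs) =
   bind_pmf (replicate_pmf (count_list bs True) A) (\<lambda>xs.
     bind_pmf (replicate_pmf (count_list bs False) B) (\<lambda>ys. return_pmf (interleave bs xs ys)))"
proof (induction bs)
  case Nil
  then show ?case by (simp add: bind_return_pmf)
next
  case (Cons b bs)
  show ?case
  proof (cases b)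
    case True
    then show ?thesis by (simp add: Cons bind_assoc_pmf bind_return_pmf map_pmf_def)
  next
    case False
    then show ?thesis
      by (simp add: Cons bind_assoc_pmf bind_return_pmf map_pmf_def, subst bind_commute_pmf) simp
  qed
qed

lemma prod_list_pmf_bernoulli:
  assumes "0 \<le> c" "c \<le> 1"
  shows "prod_list (map (pmf (bernoulli_pmf c)) bs) = c ^ count_list bs True * (1 - c) ^ count_list bs False"
  by (induction bs) (use assms in auto)

lemma prob_count_list_replicate_bernoulli:
  assumes "0 \<le> c" "c \<le> 1"
  shows "measure_pmf.prob (replicate_pmf N (bernoulli_pmf c)) {bs. count_list bs True = a} =
         real (N choose a) * c ^ a * (1 - c) ^ (N - a)"
proof -
  have "measure_pmf.prob (replicate_pmf N (bernoulli_pmf c)) {bs. count_list bs True = a} =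
        pmf (map_pmf (\<lambda>bs. count_list bs True) (replicate_pmf N (bernoulli_pmf c))) a"
    by (simp add: pmf_map vimage_def)
  then show ?thesis using assms by (simp add: map_pmf_count_list_replicate_pmf)
qed

lemma count_list_replicate: "count_list (replicate n x) y = (if x = y then n else 0)"
  by (induction n) auto

definition flips_with_heads :: "real \<Rightarrow> nat \<Rightarrow> nat \<Rightarrow> bool list pmf" where
  "flips_with_heads c a b =
     cond_pmf (replicate_pmf (a + b) (bernoulli_pmf c)) {bs. count_list bs True = a}"

lemma flips_with_heads_possible:
  assumes "0 < c" "c < 1"
  shows "set_pmf (replicate_pmf (a + b) (bernoulli_pmf c)) \<inter> {bs. count_list bs True = a} \<noteq> {}"
proof -
  have "replicate a True @ replicate b False \<in>
      set_pmf (replicate_pmf (a + b) (bernoulli_pmf c)) \<inter> {bs. count_list bs True = a}"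
    using assms by (auto simp: set_replicate_pmf count_list_replicate)
  then show ?thesis by blast
qed

lemma set_flips_with_heads:
  assumes "0 < c" "c < 1" and "bs \<in> set_pmf (flips_with_heads c a b)"
  shows "count_list bs True = a" and "count_list bs False = b"
  using assms flips_with_heads_possible[OF assms(1,2), of a b] count_list_True_False[of bs]
  by (auto simp: flips_with_heads_def set_cond_pmf set_replicate_pmf)

text \<open>The numbers of heads and tails among \<open>Poi(m)\<close> coin flips are independent Poisson
  variables, and given these numbers the order of the flips carries no further information.\<close>

lemma poisson_thinning:
  assumes c: "0 < c" "c < 1" and m: "0 < m"
  shows "bind_pmf (poisson_pmf m) (\<lambda>N. replicate_pmf N (bernoulli_pmf c)) =
    bind_pmf (poisson_pmf (c * m)) (\<lambda>a. bind_pmf (poisson_pmf ((1 - c) * m)) (\<lambda>b.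
      flips_with_heads c a b))"
    (is "?L = ?R")
proof (rule pmf_eqI)
  fix bs :: "bool list"
  define a0 where "a0 = count_list bs True"
  define b0 where "b0 = count_list bs False"
  define V where "V = (c ^ a0 * (1 - c) ^ b0) / (real ((a0 + b0) choose a0) * c ^ a0 * (1 - c) ^ b0)"
  have len: "length bs = a0 + b0" using count_list_True_False[of bs] by (simp add: a0_def b0_def)
  have L: "pmf ?L bs = pmf (poisson_pmf m) (a0 + b0) * (c ^ a0 * (1 - c) ^ b0)"
    unfolding pmf_bind
    by (subst integral_measure_pmf_real[where A="{a0 + b0}"])
       (auto simp: pmf_replicate_pmf len prod_list_pmf_bernoulli c less_imp_le a0_def b0_def
          split: if_splits)
  have flips: "pmf (flips_with_heads c a b) bs = (if a = a0 \<and> b = b0 then V else 0)" for a b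
    using flips_with_heads_possible[OF c, of a b] c
    by (auto simp: flips_with_heads_def pmf_cond prob_count_list_replicate_bernoulli
        pmf_replicate_pmf len prod_list_pmf_bernoulli less_imp_le a0_def b0_def V_def)
  have R: "pmf ?R bs = pmf (poisson_pmf (c * m)) a0 * pmf (poisson_pmf ((1 - c) * m)) b0 * V"
  proof -
    have "measure_pmf.expectation (poisson_pmf ((1 - c) * m)) (\<lambda>b. pmf (flips_with_heads c a b) bs)
       = (if a = a0 then pmf (poisson_pmf ((1 - c) * m)) b0 * V else 0)" for a
      unfolding flips by (subst integral_measure_pmf_real[where A="{b0}"]) (auto split: if_splits)
    then show ?thesis
      unfolding pmf_bind
      by (subst integral_measure_pmf_real[where A="{a0}"]) (auto split: if_splits)
  qed
  have choose: "real ((a0 + b0) choose a0) = fact (a0 + b0) / (fact a0 * fact b0)"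
    by (simp add: binomial_fact)
  have exp_split: "exp (- (c * m)) * exp (- ((1 - c) * m)) = exp (- m)"
    by (simp add: exp_add[symmetric] algebra_simps)
  have "c ^ a0 * (1 - c) ^ b0 > 0" "0 < c * m" "0 < (1 - c) * m" using c m by simp_all
  then show "pmf ?L bs = pmf ?R bs"
    unfolding L R V_def using m
    apply (simp add: choose power_mult_distrib power_add)
    apply (simp add: field_simps)
    using exp_split apply (simp add: algebra_simps)
    done
qed

text \<open>A tester that gets only the samples of the first component of a mixture pads them with
  \<open>Poi((1 - c) m)\<close> fresh samples of the second component and shuffles both in at random.\<close>

definition padded_tester ::
    "real \<Rightarrow> real \<Rightarrow> 'a pmf \<Rightarrow> ('a list \<Rightarrow> 'b pmf) \<Rightarrow> 'a list \<Rightarrow> 'b pmf" where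
  "padded_tester c m B T xs = bind_pmf (poisson_pmf ((1 - c) * m)) (\<lambda>b.
      bind_pmf (flips_with_heads c (length xs) b) (\<lambda>bs.
        bind_pmf (replicate_pmf b B) (\<lambda>ys. T (interleave bs xs ys))))"

lemma poisson_samples_of_mixture:
  assumes c: "0 < c" "c < 1" and m: "0 < m"
  shows "bind_pmf (poisson_pmf m) (\<lambda>N. bind_pmf (replicate_pmf N
            (bind_pmf (bernoulli_pmf c) (\<lambda>b. if b then A else B))) T) =
         bind_pmf (poisson_pmf (c * m)) (\<lambda>a. bind_pmf (replicate_pmf a A) (padded_tester c m B T))"
proof -
  define merged where "merged bs = bind_pmf (replicate_pmf (count_list bs True) A) (\<lambda>xs.
      bind_pmf (replicate_pmf (count_list bs False) B) (\<lambda>ys. return_pmf (interleave bs xs ys)))"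
    for bs
  have "bind_pmf (poisson_pmf m) (\<lambda>N. bind_pmf (replicate_pmf N
            (bind_pmf (bernoulli_pmf c) (\<lambda>b. if b then A else B))) T) =
        bind_pmf (bind_pmf (poisson_pmf m) (\<lambda>N. replicate_pmf N (bernoulli_pmf c)))
          (\<lambda>bs. bind_pmf (merged bs) T)"
    by (simp add: replicate_pmf_bind_pmf bind_assoc_pmf sequence_pmf_map_if merged_def)
  also have "\<dots> = bind_pmf (poisson_pmf (c * m)) (\<lambda>a. bind_pmf (poisson_pmf ((1 - c) * m)) (\<lambda>b.
       bind_pmf (flips_with_heads c a b) (\<lambda>bs. bind_pmf (merged bs) T)))"
    unfolding poisson_thinning[OF c m] by (simp add: bind_assoc_pmf)
  also have "\<dots> = bind_pmf (poisson_pmf (c * m)) (\<lambda>a. bind_pmf (poisson_pmf ((1 - c) * m)) (\<lambda>b.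
       bind_pmf (flips_with_heads c a b) (\<lambda>bs. bind_pmf (replicate_pmf a A) (\<lambda>xs.
         bind_pmf (replicate_pmf b B) (\<lambda>ys. T (interleave bs xs ys))))))"
    by (intro bind_pmf_cong[OF refl])
       (simp add: merged_def bind_assoc_pmf bind_return_pmf set_flips_with_heads[OF c])
  also have "\<dots> = bind_pmf (poisson_pmf (c * m)) (\<lambda>a. bind_pmf (replicate_pmf a A) (\<lambda>xs.
       bind_pmf (poisson_pmf ((1 - c) * m)) (\<lambda>b. bind_pmf (flips_with_heads c a b) (\<lambda>bs.
         bind_pmf (replicate_pmf b B) (\<lambda>ys. T (interleave bs xs ys))))))"
    by (subst bind_commute_pmf[of "flips_with_heads _ _ _"], subst bind_commute_pmf) (rule refl)
  also have "\<dots> = bind_pmf (poisson_pmf (c * m)) (\<lambda>a. bind_pmf (replicate_pmf a A) (padded_tester c m B T))"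
    by (intro bind_pmf_cong[OF refl]) (simp add: padded_tester_def set_replicate_pmf)
  finally show ?thesis .
qed

section \<open>Some tester always exists\<close>

definition empirical_deviation :: "nat set \<Rightarrow> nat pmf \<Rightarrow> nat list \<Rightarrow> real" where
  "empirical_deviation D p xs = (\<Sum>i\<in>D. \<bar>real (count_list xs i) / real (length xs) - pmf p i\<bar>)"

lemma empirical_deviation_le: "empirical_deviation D q xs \<le> empirical_deviation D p xs + l1dist D p q"
  unfolding empirical_deviation_def l1dist_def sum.distrib[symmetric] by (rule sum_mono) linarith

lemma l1dist_le_empirical_deviation:
  "l1dist D p q \<le> empirical_deviation D p xs + empirical_deviation D q xs"
  unfolding empirical_deviation_def l1dist_def sum.distrib[symmetric] by (rule sum_mono) linarith

text \<open>A union bound over \<open>D\<close> together with Hoeffding's inequality for each count.\<close>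

lemma prob_empirical_deviation_ge:
  assumes D: "finite D" "D \<noteq> {}" and N: "N > 0" and \<eta>: "\<eta> > 0"
  shows "measure_pmf.prob (replicate_pmf N p) {xs. \<eta> \<le> empirical_deviation D p xs}
     \<le> real (card D) * (2 * exp (- 2 * real N * (\<eta> / card D)\<^sup>2))"
proof -
  define k where "k = real (card D)"
  have k: "k > 0" using D by (simp add: k_def card_gt_0_iff)
  define E where "E i = {xs. \<eta> / k \<le> \<bar>real (count_list xs i) / real N - pmf p i\<bar>}" for i
  have sub: "{xs. \<eta> \<le> empirical_deviation D p xs} \<inter> set_pmf (replicate_pmf N p) \<subseteq> (\<Union>i\<in>D. E i)"
  proof
    fix xs assume xs: "xs \<in> {xs. \<eta> \<le> empirical_deviation D p xs} \<inter> set_pmf (replicate_pmf N p)"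
    then have len: "length xs = N" by (simp add: set_replicate_pmf)
    show "xs \<in> (\<Union>i\<in>D. E i)"
    proof (rule ccontr)
      assume "xs \<notin> (\<Union>i\<in>D. E i)"
      then have "\<forall>i\<in>D. \<bar>real (count_list xs i) / real N - pmf p i\<bar> < \<eta> / k"
        by (auto simp: E_def not_le)
      then have "empirical_deviation D p xs < (\<Sum>i\<in>D. \<eta> / k)"
        unfolding empirical_deviation_def len using D by (intro sum_strict_mono) auto
      also have "\<dots> = \<eta>" using k by (simp add: k_def)
      finally show False using xs by simp
    qed
  qed
  have "measure_pmf.prob (replicate_pmf N p) {xs. \<eta> \<le> empirical_deviation D p xs} =
        measure_pmf.prob (replicate_pmf N p)
          ({xs. \<eta> \<le> empirical_deviation D p xs} \<inter> set_pmf (replicate_pmf N p))"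
    by (simp add: measure_Int_set_pmf)
  also have "\<dots> \<le> measure_pmf.prob (replicate_pmf N p) (\<Union>i\<in>D. E i)"
    by (rule measure_pmf.finite_measure_mono[OF sub]) simp
  also have "\<dots> \<le> (\<Sum>i\<in>D. measure_pmf.prob (replicate_pmf N p) (E i))"
    by (rule measure_pmf.finite_measure_subadditive_finite) (use D in auto)
  also have "\<dots> \<le> (\<Sum>i\<in>D. 2 * exp (- 2 * real N * (\<eta> / k)\<^sup>2))"
  proof (rule sum_mono)
    fix i assume "i \<in> D"
    have "measure_pmf.prob (replicate_pmf N p) (E i) = measure_pmf.prob (binomial_pmf N (pmf p i))
            {x. \<eta> / k \<le> \<bar>real x / real N - pmf p i\<bar>}"
      by (simp add: E_def vimage_def flip: map_pmf_count_list_replicate_pmf)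
    also have "\<dots> \<le> 2 * exp (real_of_int (- 2 * int N) * (\<eta> / k)\<^sup>2)"
      by (rule binomial_distribution.prob_abs_ge')
         (use N \<eta> k in \<open>auto simp: binomial_distribution_def pmf_le_1\<close>)
    finally show "measure_pmf.prob (replicate_pmf N p) (E i) \<le> 2 * exp (- 2 * real N * (\<eta> / k)\<^sup>2)"
      by simp
  qed
  finally show ?thesis by (simp add: k_def)
qed

lemma eventually_prob_empirical_deviation_le:
  assumes "finite D" "D \<noteq> {}" "\<eta> > 0" "\<epsilon> > 0"
  shows "eventually (\<lambda>N. \<forall>p.
    measure_pmf.prob (replicate_pmf N p) {xs. \<eta> \<le> empirical_deviation D p xs} \<le> \<epsilon>) at_top"
proof -
  define k where "k = real (card D)"
  have k: "k > 0" using assms by (simp add: k_def card_gt_0_iff)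
  have "((\<lambda>N::nat. k * 2 * exp (- 2 * real N * (\<eta> / k)\<^sup>2)) \<longlongrightarrow> 0) at_top"
    using k assms(3) by real_asymp
  then have "eventually (\<lambda>N. k * 2 * exp (- 2 * real N * (\<eta> / k)\<^sup>2) < \<epsilon>) at_top"
    using assms(4) by (intro order_tendstoD(2)) auto
  then show ?thesis
    using eventually_gt_at_top[of 0]
  proof eventually_elim
    case (elim N)
    show ?case
    proof
      fix p
      show "measure_pmf.prob (replicate_pmf N p) {xs. \<eta> \<le> empirical_deviation D p xs} \<le> \<epsilon>"
        using prob_empirical_deviation_ge[OF assms(1,2) elim(2) assms(3), of p] elim(1)
        by (simp add: k_def mult.assoc)
    qed
  qed
qed

lemma eventually_prob_poisson_lessThan_less:
  assumes "\<epsilon> > 0"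
  shows "eventually (\<lambda>m. 0 < m \<and> measure_pmf.prob (poisson_pmf m) {..<K} < \<epsilon>) at_top"
proof -
  have term_lim: "((\<lambda>m::real. m ^ j / fact j * exp (- m)) \<longlongrightarrow> 0) at_top" for j :: nat
    by real_asymp
  have "((\<lambda>m::real. \<Sum>j<K. m ^ j / fact j * exp (- m)) \<longlongrightarrow> 0) at_top"
    by (rule tendsto_null_sum) (rule term_lim)
  then have "eventually (\<lambda>m. (\<Sum>j<K. m ^ j / fact j * exp (- m)) < \<epsilon>) at_top"
    using assms by (intro order_tendstoD(2)) auto
  then show ?thesis
    using eventually_gt_at_top[of 0]
    by eventually_elim (simp add: measure_measure_pmf_finite)
qed

lemma pmf_bind_pmf_le:
  assumes "\<And>x. x \<in> set_pmf M \<Longrightarrow> x \<notin> A \<Longrightarrow> pmf (f x) y \<le> e" and "0 \<le> e"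
  shows "pmf (bind_pmf M f) y \<le> measure_pmf.prob M A + e"
proof -
  have "pmf (bind_pmf M f) y = measure_pmf.expectation M (\<lambda>x. pmf (f x) y)"
    by (simp add: pmf_bind)
  also have "\<dots> \<le> measure_pmf.expectation M (\<lambda>x. indicator A x + e)"
  proof (rule integral_mono_AE)
    show "integrable (measure_pmf M) (\<lambda>x. pmf (f x) y)"
      by (rule measure_pmf.integrable_const_bound[where B=1]) (auto simp: pmf_le_1)
    show "integrable (measure_pmf M) (\<lambda>x. indicator A x + e)"
      by (rule measure_pmf.integrable_const_bound[where B="1 + e"])
         (use assms(2) in \<open>auto simp: indicator_def\<close>)
    show "AE x in measure_pmf M. pmf (f x) y \<le> indicator A x + e"
      using assms by (auto simp: AE_measure_pmf_iff indicator_def pmf_le_1 add_increasing2)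
  qed
  also have "\<dots> = measure_pmf.prob M A + e"
    by (subst Bochner_Integration.integral_add)
       (auto intro!: measure_pmf.integrable_const_bound[where B=1] simp: indicator_def)
  finally show ?thesis .
qed

lemma measure_pmf_single_bool: "measure_pmf.prob M {b} = 1 - pmf M (\<not> b)"
proof -
  have "sum (pmf M) UNIV = 1" by (rule sum_pmf_eq_1) auto
  then show ?thesis by (cases b) (simp_all add: UNIV_bool measure_pmf_single)
qed

lemma pmf_tester_out_le:
  assumes "0 < m" and "measure_pmf.prob (poisson_pmf m) {..<K} \<le> \<epsilon>" and "0 \<le> \<epsilon>'"
    and "\<And>N. N \<ge> K \<Longrightarrow> pmf (bind_pmf (replicate_pmf N p) T) b \<le> \<epsilon>'"
  shows "pmf (tester_out T m p) b \<le> \<epsilon> + \<epsilon>'"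
proof -
  have "pmf (tester_out T m p) b \<le> measure_pmf.prob (poisson_pmf m) {..<K} + \<epsilon>'"
    unfolding tester_out_def Poi_def if_P[OF assms(1)]
    by (rule pmf_bind_pmf_le) (use assms(3,4) in auto)
  then show ?thesis using assms(2) by simp
qed

lemma good_tester_exists:
  assumes D: "finite D" "D \<noteq> {}" and e: "e1 < e2" and \<delta>: "\<delta> > 0"
  shows "\<exists>m T. 0 \<le> m \<and> good_tester D q e1 e2 \<delta> m T"
proof -
  define \<eta> where "\<eta> = (e2 - e1) / 2"
  have \<eta>: "\<eta> > 0" using e by (simp add: \<eta>_def)
  obtain K where K: "\<And>N p. N \<ge> K \<Longrightarrow>
      measure_pmf.prob (replicate_pmf N p) {xs. \<eta> \<le> empirical_deviation D p xs} \<le> \<delta> / 2"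
    using eventually_prob_empirical_deviation_le[OF D \<eta>, of "\<delta> / 2"] \<delta>
    by (auto simp: eventually_at_top_linorder)
  obtain m where m: "0 < m" "measure_pmf.prob (poisson_pmf m) {..<K} < \<delta> / 2"
    using eventually_happens'[OF _ eventually_prob_poisson_lessThan_less[of "\<delta> / 2" K]] \<delta> by auto
  define T where "T xs = return_pmf (empirical_deviation D q xs \<le> e1 + \<eta>)" for xs
  have error_le: "pmf (tester_out T m p) b \<le> \<delta>"
    if wrong: "\<And>xs. (empirical_deviation D q xs \<le> e1 + \<eta>) = b \<Longrightarrow> \<eta> \<le> empirical_deviation D p xs"
    for p b
  proof -
    have "pmf (bind_pmf (replicate_pmf N p) T) b \<le> \<delta> / 2" if "N \<ge> K" for N
    proof -
      have "pmf (bind_pmf (replicate_pmf N p) T) b \<le>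
          measure_pmf.prob (replicate_pmf N p) {xs. \<eta> \<le> empirical_deviation D p xs}"
        unfolding T_def bind_return_pmf'[symmetric] map_pmf_def[symmetric] pmf_map
        by (rule measure_pmf.finite_measure_mono) (auto intro: wrong)
      then show ?thesis using K[OF that, of p] by simp
    qed
    then have "pmf (tester_out T m p) b \<le> \<delta> / 2 + \<delta> / 2"
      using m \<delta> by (intro pmf_tester_out_le[of m K]) auto
    then show ?thesis by simp
  qed
  have "good_tester D q e1 e2 \<delta> m T"
    unfolding good_tester_def measure_pmf_single_bool
  proof (intro allI impI conjI)
    fix p :: "nat pmf"
    assume close: "l1dist D p q \<le> e1"
    have "\<eta> \<le> empirical_deviation D p xs" if "\<not> empirical_deviation D q xs \<le> e1 + \<eta>" for xs
      using that close empirical_deviation_le[of D q xs p] by linarith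
    then have "pmf (tester_out T m p) False \<le> \<delta>" by (intro error_le) auto
    then show "1 - \<delta> \<le> 1 - pmf (tester_out T m p) (\<not> True)" by simp
  next
    fix p :: "nat pmf"
    assume far: "e2 \<le> l1dist D p q"
    have "\<eta> \<le> empirical_deviation D p xs" if "empirical_deviation D q xs \<le> e1 + \<eta>" for xs
      using that far l1dist_le_empirical_deviation[of D p q xs] by (simp add: \<eta>_def field_simps)
    then have "pmf (tester_out T m p) True \<le> \<delta>" by (intro error_le) auto
    then show "1 - \<delta> \<le> 1 - pmf (tester_out T m p) (\<not> False)" by simp
  qed
  then show ?thesis using m(1) less_imp_le by blast
qed

section \<open>Splitting \<open>S\<close> into blocks of comparable mass\<close>

text \<open>Cutting the prefix sums of \<open>w\<close> into the window \<open>[a, b)\<close> loses at most one atom at the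
  lower end.\<close>

lemma prefix_sum_window_ge:
  fixes w :: "nat \<Rightarrow> real" and S :: "nat set"
  assumes fin: "finite S" and nonneg: "\<And>k. k \<in> S \<Longrightarrow> 0 \<le> w k"
    and le: "\<And>k. k \<in> S \<Longrightarrow> w k \<le> M" and "0 \<le> M"
    and ab: "0 \<le> a" "a < b" "b \<le> (\<Sum>k\<in>S. w k)"
  defines "P \<equiv> \<lambda>i. \<Sum>k\<in>S \<inter> {..<i}. w k"
  shows "b - a - M \<le> (\<Sum>i\<in>{i\<in>S. a \<le> P i \<and> P i < b}. w i)"
proof -
  have mono: "P i \<le> P j" if "i \<le> j" for i j
    unfolding P_def using that fin nonneg by (intro sum_mono2) auto
  obtain B where "S \<subseteq> {..<B}" using fin finite_nat_bounded by blast
  then have PB: "P B = (\<Sum>k\<in>S. w k)" unfolding P_def by (simp add: Int_absorb2)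
  define \<alpha> where "\<alpha> = (LEAST i. a \<le> P i)"
  define \<beta> where "\<beta> = (LEAST i. b \<le> P i)"
  have Pa: "a \<le> P \<alpha>" unfolding \<alpha>_def by (rule LeastI[of _ B]) (use PB ab in auto)
  have Pb: "b \<le> P \<beta>" unfolding \<beta>_def by (rule LeastI[of _ B]) (use PB ab in auto)
  have "\<alpha> \<le> \<beta>" unfolding \<alpha>_def by (rule Least_le) (use Pb ab in auto)
  have window: "{i\<in>S. a \<le> P i \<and> P i < b} = S \<inter> {\<alpha>..<\<beta>}"
  proof (intro set_eqI iffI)
    fix i assume i: "i \<in> {i\<in>S. a \<le> P i \<and> P i < b}"
    have "\<alpha> \<le> i" unfolding \<alpha>_def by (rule Least_le) (use i in auto)
    moreover have "i < \<beta>" using i Pb mono[of \<beta> i] by (cases "i < \<beta>") auto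
    ultimately show "i \<in> S \<inter> {\<alpha>..<\<beta>}" using i by auto
  next
    fix i assume i: "i \<in> S \<inter> {\<alpha>..<\<beta>}"
    then have "\<not> b \<le> P i" unfolding \<beta>_def using not_less_Least by auto
    then show "i \<in> {i\<in>S. a \<le> P i \<and> P i < b}" using i Pa mono[of \<alpha> i] by auto
  qed
  have split: "S \<inter> {..<\<beta>} = (S \<inter> {..<\<alpha>}) \<union> (S \<inter> {\<alpha>..<\<beta>})" using \<open>\<alpha> \<le> \<beta>\<close> by auto
  have "P \<beta> = P \<alpha> + (\<Sum>i\<in>S \<inter> {\<alpha>..<\<beta>}. w i)"
    unfolding P_def split by (subst sum.union_disjoint) (use fin in auto)
  moreover have "P \<alpha> \<le> a + M"
  proof (cases \<alpha>)
    case 0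
    then show ?thesis using ab \<open>0 \<le> M\<close> by (simp add: P_def)
  next
    case (Suc \<alpha>')
    then have "\<alpha>' < \<alpha>" by simp
    then have "\<not> a \<le> P \<alpha>'" unfolding \<alpha>_def by (rule not_less_Least)
    moreover have "S \<inter> {..<Suc \<alpha>'} = (if \<alpha>' \<in> S then insert \<alpha>' (S \<inter> {..<\<alpha>'}) else S \<inter> {..<\<alpha>'})"
      by (auto simp: less_Suc_eq)
    then have "P (Suc \<alpha>') = P \<alpha>' + (if \<alpha>' \<in> S then w \<alpha>' else 0)"
      unfolding P_def using fin by (auto simp: add.commute)
    ultimately show ?thesis using le[of \<alpha>'] \<open>0 \<le> M\<close> Suc by (cases "\<alpha>' \<in> S") auto
  qed
  ultimately show ?thesis unfolding window using Pb by linarith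
qed

locale block_embedding =
  fixes q :: "nat pmf" and D S :: "nat set"
  assumes finite_D: "finite D" and set_pmf_q: "set_pmf q \<subseteq> D" and S_subset: "S \<subseteq> D"
    and Rnum_pos: "Rnum q S \<ge> 1"
begin

abbreviation "R \<equiv> Rnum q S"

definition "width = qmass q S / R"
definition "prefix_mass i = (\<Sum>k\<in>S \<inter> {..<i}. pmf q k)"
definition "block_of i = nat \<lfloor>prefix_mass i / width\<rfloor> + 1"
definition "block j = {i\<in>S. block_of i = j}"
definition "block_mass j = (\<Sum>i\<in>block j. pmf q i)"

lemma finite_S: "finite S"
  using S_subset finite_D finite_subset by blast

lemma qmass_nonneg: "0 \<le> qmass q S"
  unfolding qmass_def by (rule sum_nonneg) simp

lemma pmf_le_Mmax: "i \<in> S \<Longrightarrow> pmf q i \<le> Mmax q S"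
  unfolding Mmax_def using finite_S by (intro Max_ge) auto

lemma Mmax_pos: "0 < Mmax q S"
proof (rule ccontr)
  assume "\<not> 0 < Mmax q S"
  then have "qmass q S / (2 * Mmax q S) \<le> 0"
    using qmass_nonneg by (intro divide_nonneg_nonpos) auto
  then have "R = 0" unfolding Rnum_def by linarith
  then show False using Rnum_pos by simp
qed

lemma R_mult_Mmax_le: "real R * (2 * Mmax q S) \<le> qmass q S"
proof -
  have "\<lfloor>qmass q S / (2 * Mmax q S)\<rfloor> \<ge> 1" using Rnum_pos unfolding Rnum_def by linarith
  then have "real R = of_int \<lfloor>qmass q S / (2 * Mmax q S)\<rfloor>" unfolding Rnum_def by simp
  also have "\<dots> \<le> qmass q S / (2 * Mmax q S)" by (rule of_int_floor_le)
  finally show ?thesis using Mmax_pos by (simp add: field_simps)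
qed

lemma qmass_pos: "0 < qmass q S"
proof -
  have "0 < real R * (2 * Mmax q S)" using Rnum_pos Mmax_pos by simp
  then show ?thesis using R_mult_Mmax_le by linarith
qed

lemma qmass_le_1: "qmass q S \<le> 1"
proof -
  have "qmass q S = measure_pmf.prob q S"
    unfolding qmass_def using finite_S by (simp add: measure_measure_pmf_finite)
  then show ?thesis by simp
qed

lemma width_pos: "0 < width"
  unfolding width_def using qmass_pos Rnum_pos by simp

lemma Mmax_le_half_width: "Mmax q S \<le> width / 2"
  unfolding width_def using R_mult_Mmax_le Rnum_pos by (simp add: field_simps)

lemma block_eq:
  assumes "j \<ge> 1"
  shows "block j = {i\<in>S. (real j - 1) * width \<le> prefix_mass i \<and> prefix_mass i < real j * width}"
proof -
  have "block_of i = j \<longleftrightarrow> (real j - 1) * width \<le> prefix_mass i \<and> prefix_mass i < real j * width"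
    for i
  proof -
    have "0 \<le> prefix_mass i" unfolding prefix_mass_def by (rule sum_nonneg) simp
    then have "\<lfloor>prefix_mass i / width\<rfloor> \<ge> 0" using width_pos by simp
    then have "block_of i = j \<longleftrightarrow> \<lfloor>prefix_mass i / width\<rfloor> = int j - 1"
      unfolding block_of_def using assms by linarith
    also have "\<dots> \<longleftrightarrow> real j - 1 \<le> prefix_mass i / width \<and> prefix_mass i / width < real j"
      by (simp add: floor_eq_iff)
    also have "\<dots> \<longleftrightarrow> (real j - 1) * width \<le> prefix_mass i \<and> prefix_mass i < real j * width"
      using width_pos by (simp add: field_simps)
    finally show ?thesis .
  qed
  then show ?thesis unfolding block_def by auto
qed

lemma block_mass_ge:
  assumes j: "j \<in> {1..R}"
  shows "width / 2 \<le> block_mass j"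
proof -
  have "real j * width \<le> real R * width"
    using j width_pos by (intro mult_right_mono) auto
  also have "\<dots> = (\<Sum>k\<in>S. pmf q k)" using Rnum_pos by (simp add: width_def qmass_def)
  finally have "real j * width - (real j - 1) * width - Mmax q S \<le>
      (\<Sum>i\<in>{i\<in>S. (real j - 1) * width \<le> prefix_mass i \<and> prefix_mass i < real j * width}. pmf q i)"
    unfolding prefix_mass_def
    by (intro prefix_sum_window_ge) (use j finite_S pmf_le_Mmax Mmax_pos width_pos in auto)
  also have "\<dots> = block_mass j"
    using j by (simp add: block_mass_def block_eq)
  finally show ?thesis using Mmax_le_half_width by (simp add: algebra_simps)
qed

lemma block_mass_pos:
  assumes "j \<in> {1..R}"
  shows "0 < block_mass j"
  using block_mass_ge[OF assms] width_pos by linarith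

definition "block_pmf j = cond_pmf q (block j)"

lemma block_subset: "block j \<subseteq> S"
  by (auto simp: block_def)

lemma block_pmf_well_defined:
  assumes "j \<in> {1..R}"
  shows "set_pmf q \<inter> block j \<noteq> {}"
proof
  assume "set_pmf q \<inter> block j = {}"
  then have "block_mass j = 0"
    unfolding block_mass_def by (intro sum.neutral) (auto simp: set_pmf_iff)
  then show False using block_mass_pos[OF assms] by simp
qed

lemma pmf_block_pmf:
  assumes "j \<in> {1..R}"
  shows "pmf (block_pmf j) i = (if i \<in> block j then pmf q i / block_mass j else 0)"
proof -
  have "finite (block j)" using finite_S block_subset finite_subset by blast
  then have "measure_pmf.prob q (block j) = block_mass j"
    unfolding block_mass_def by (simp add: measure_measure_pmf_finite)
  then show ?thesis
    unfolding block_pmf_def using block_pmf_well_defined[OF assms] by (simp add: pmf_cond)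
qed

lemma set_block_pmf: "j \<in> {1..R} \<Longrightarrow> set_pmf (block_pmf j) \<subseteq> D"
  unfolding block_pmf_def using block_pmf_well_defined block_subset S_subset
  by (auto simp: set_cond_pmf)

lemma pmf_block_pmf_outside: "j \<in> {1..R} \<Longrightarrow> i \<notin> D \<Longrightarrow> pmf (block_pmf j) i = 0"
  using set_block_pmf by (meson set_pmf_iff subsetD)

lemma sum_pmf_block_pmf: "j \<in> {1..R} \<Longrightarrow> (\<Sum>i\<in>D. pmf (block_pmf j) i) = 1"
  using set_block_pmf finite_D by (intro sum_pmf_eq_1) auto

lemma sum_over_blocks:
  "(\<Sum>j\<in>{1..R}. y j * pmf (block_pmf j) i) =
    (if block_of i \<in> {1..R} then y (block_of i) * pmf (block_pmf (block_of i)) i else 0)"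
proof -
  have "(\<Sum>j\<in>{1..R}. y j * pmf (block_pmf j) i) =
      (\<Sum>j\<in>{1..R}. if j = block_of i then y j * pmf (block_pmf j) i else 0)"
    by (rule sum.cong) (auto simp: pmf_block_pmf block_def)
  then show ?thesis by (simp add: sum.delta)
qed

section \<open>Embedding distributions on \<open>[R]\<close> into distributions on \<open>D\<close>\<close>

definition "weight = qmass q S / 4"

lemma weight_bounds: "0 < weight" "weight < 1"
  using qmass_pos qmass_le_1 by (auto simp: weight_def)

definition "uniform_image i = (\<Sum>j\<in>{1..R}. 1 / real R * pmf (block_pmf j) i)"

definition "filler_density i = (pmf q i - weight * uniform_image i) / (1 - weight)"

text \<open>Nonnegativity of the filler is where the lower bound on the block masses enters:
  the weight put on a block, \<open>weight / R = width / 4\<close>, is less than its mass.\<close>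

lemma weight_uniform_image_le: "weight * uniform_image i \<le> pmf q i"
proof (cases "block_of i \<in> {1..R}")
  case True
  define j where "j = block_of i"
  have j: "j \<in> {1..R}" using True by (simp add: j_def)
  have image: "uniform_image i = 1 / real R * pmf (block_pmf j) i"
    unfolding uniform_image_def sum_over_blocks using True by (simp add: j_def)
  have "weight * (1 / real R) = width / 4" by (simp add: weight_def width_def)
  also have "\<dots> \<le> block_mass j" using block_mass_ge[OF j] width_pos by simp
  finally have "weight * uniform_image i \<le> block_mass j * pmf (block_pmf j) i"
    unfolding image mult.assoc[symmetric] by (rule mult_right_mono) simp
  also have "\<dots> \<le> pmf q i"
    using block_mass_pos[OF j] by (simp add: pmf_block_pmf[OF j])
  finally show ?thesis .
next
  case False
  then have "uniform_image i = 0" unfolding uniform_image_def sum_over_blocks by (rule if_not_P)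
  then show ?thesis by simp
qed

lemma filler_density_nonneg: "0 \<le> filler_density i"
  unfolding filler_density_def using weight_uniform_image_le[of i] weight_bounds by simp

lemma filler_density_outside: "i \<notin> D \<Longrightarrow> filler_density i = 0"
  using set_pmf_q
  by (auto simp: filler_density_def uniform_image_def pmf_block_pmf_outside set_pmf_iff
      intro!: sum.neutral)

lemma sum_filler_density: "(\<Sum>i\<in>D. filler_density i) = 1"
proof -
  have "(\<Sum>i\<in>D. uniform_image i) = (\<Sum>j\<in>{1..R}. 1 / real R * (\<Sum>i\<in>D. pmf (block_pmf j) i))"
    unfolding uniform_image_def sum_distrib_left by (rule sum.swap)
  also have "\<dots> = 1" using Rnum_pos by (simp add: sum_pmf_block_pmf)
  finally have "(\<Sum>i\<in>D. uniform_image i) = 1" .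
  moreover have "(\<Sum>i\<in>D. pmf q i) = 1" using set_pmf_q finite_D by (intro sum_pmf_eq_1) auto
  moreover have "(\<Sum>i\<in>D. filler_density i) =
      ((\<Sum>i\<in>D. pmf q i) - weight * (\<Sum>i\<in>D. uniform_image i)) / (1 - weight)"
    unfolding filler_density_def
    by (simp add: sum_divide_distrib[symmetric] sum_subtractf sum_distrib_left)
  ultimately show ?thesis using weight_bounds by simp
qed

definition "filler = embed_pmf filler_density"

lemma pmf_filler: "pmf filler i = filler_density i"
proof -
  have "(\<integral>\<^sup>+ x. ennreal (filler_density x) \<partial>count_space UNIV) = (\<Sum>x\<in>D. ennreal (filler_density x))"
    by (rule nn_integral_count_space') (auto simp: filler_density_outside finite_D)
  also have "\<dots> = 1"
    by (subst sum_ennreal) (simp_all add: filler_density_nonneg sum_filler_density)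
  finally show ?thesis
    unfolding filler_def by (rule pmf_embed_pmf[OF filler_density_nonneg])
qed

definition "embed_on_blocks p' =
  bind_pmf (bernoulli_pmf weight) (\<lambda>b. if b then bind_pmf p' block_pmf else filler)"

lemma pmf_embed_on_blocks_minus_q:
  assumes "set_pmf p' \<subseteq> {1..R}"
  shows "pmf (embed_on_blocks p') i - pmf q i =
    weight * (\<Sum>j\<in>{1..R}. (pmf p' j - 1 / real R) * pmf (block_pmf j) i)"
proof -
  have "pmf (bind_pmf p' block_pmf) i = (\<Sum>j\<in>{1..R}. pmf p' j * pmf (block_pmf j) i)"
    unfolding pmf_bind
    by (subst integral_measure_pmf_real[where A="{1..R}"]) (use assms in \<open>auto simp: mult.commute\<close>)
  moreover have "pmf (embed_on_blocks p') i =
      pmf (bind_pmf p' block_pmf) i * weight + pmf filler i * (1 - weight)"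
    unfolding embed_on_blocks_def using weight_bounds
    by (subst pmf_bind) (simp add: integral_bernoulli_pmf)
  moreover have "pmf filler i * (1 - weight) = pmf q i - weight * uniform_image i"
    using weight_bounds by (simp add: pmf_filler filler_density_def)
  ultimately have "pmf (embed_on_blocks p') i - pmf q i =
      weight * (\<Sum>j\<in>{1..R}. pmf p' j * pmf (block_pmf j) i) - weight * uniform_image i"
    by (simp add: algebra_simps)
  then show ?thesis
    by (simp add: uniform_image_def algebra_simps sum_subtractf sum_distrib_left)
qed

lemma set_pmf_embed_on_blocks:
  assumes "set_pmf p' \<subseteq> {1..R}"
  shows "set_pmf (embed_on_blocks p') \<subseteq> D"
proof
  fix i assume i: "i \<in> set_pmf (embed_on_blocks p')"
  show "i \<in> D"
  proof (rule ccontr)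
    assume "i \<notin> D"
    then have "pmf (embed_on_blocks p') i = 0"
      using pmf_embed_on_blocks_minus_q[OF assms, of i] set_pmf_q
      by (auto simp: pmf_block_pmf_outside set_pmf_iff intro!: sum.neutral)
    then show False using i by (simp add: set_pmf_iff)
  qed
qed

lemma pmf_Unif: "j \<in> {1..R} \<Longrightarrow> pmf (Unif R) j = 1 / real R"
  unfolding Unif_def using Rnum_pos by (simp add: pmf_of_set)

lemma l1dist_embed_on_blocks:
  assumes "set_pmf p' \<subseteq> {1..R}"
  shows "l1dist D (embed_on_blocks p') q = weight * l1dist {1..R} p' (Unif R)"
proof -
  define x where "x j = pmf p' j - 1 / real R" for j
  have "\<bar>\<Sum>j\<in>{1..R}. x j * pmf (block_pmf j) i\<bar> = (\<Sum>j\<in>{1..R}. \<bar>x j\<bar> * pmf (block_pmf j) i)" for i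
    unfolding sum_over_blocks by (simp add: abs_mult)
  then have "l1dist D (embed_on_blocks p') q = weight * (\<Sum>i\<in>D. \<Sum>j\<in>{1..R}. \<bar>x j\<bar> * pmf (block_pmf j) i)"
    unfolding l1dist_def pmf_embed_on_blocks_minus_q[OF assms] x_def[symmetric] abs_mult
    using weight_bounds by (simp add: sum_distrib_left)
  also have "\<dots> = weight * (\<Sum>j\<in>{1..R}. \<bar>x j\<bar> * (\<Sum>i\<in>D. pmf (block_pmf j) i))"
    by (subst sum.swap) (simp add: sum_distrib_left)
  also have "\<dots> = weight * l1dist {1..R} p' (Unif R)"
    unfolding l1dist_def x_def by (simp add: pmf_Unif sum_pmf_block_pmf)
  finally show ?thesis .
qed

section \<open>Simulating a tester for \<open>q\<close>\<close>

definition "simulated_tester m T =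
  (if m = 0 then T else (\<lambda>zs. bind_pmf (sequence_pmf (map block_pmf zs)) (padded_tester weight m filler T)))"

lemma tester_out_simulated_tester:
  assumes "0 \<le> m"
  shows "tester_out (simulated_tester m T) (weight * m) p' = tester_out T m (embed_on_blocks p')"
proof (cases "m = 0")
  case True
  then show ?thesis by (simp add: tester_out_def Poi_def simulated_tester_def bind_return_pmf)
next
  case False
  with assms have m: "0 < m" by simp
  then have "tester_out T m (embed_on_blocks p') =
      bind_pmf (poisson_pmf (weight * m)) (\<lambda>a.
        bind_pmf (replicate_pmf a (bind_pmf p' block_pmf)) (padded_tester weight m filler T))"
    by (simp add: tester_out_def Poi_def embed_on_blocks_def poisson_samples_of_mixture weight_bounds)
  also have "\<dots> = bind_pmf (poisson_pmf (weight * m)) (\<lambda>a.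
      bind_pmf (replicate_pmf a p') (simulated_tester m T))"
    using m by (simp add: replicate_pmf_bind_pmf bind_assoc_pmf simulated_tester_def)
  also have "\<dots> = tester_out (simulated_tester m T) (weight * m) p'"
    using m weight_bounds by (simp add: tester_out_def Poi_def)
  finally show ?thesis by simp
qed

lemma good_tester_simulated_tester:
  assumes "0 \<le> m" and good: "good_tester D q e1 e2 \<delta> m T"
  shows "good_tester {1..R} (Unif R) (e1 / weight) (e2 / weight) \<delta> (weight * m) (simulated_tester m T)"
  unfolding good_tester_def tester_out_simulated_tester[OF assms(1)]
proof (intro allI impI conjI)
  fix p' :: "nat pmf" assume p': "set_pmf p' \<subseteq> {1..R}"
  have "l1dist D (embed_on_blocks p') q \<le> e \<longleftrightarrow> l1dist {1..R} p' (Unif R) \<le> e / weight"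
    "e \<le> l1dist D (embed_on_blocks p') q \<longleftrightarrow> e / weight \<le> l1dist {1..R} p' (Unif R)" for e
    unfolding l1dist_embed_on_blocks[OF p'] using weight_bounds by (simp_all add: field_simps)
  then show "l1dist {1..R} p' (Unif R) \<le> e1 / weight \<Longrightarrow>
      1 - \<delta> \<le> measure_pmf.prob (tester_out T m (embed_on_blocks p')) {True}"
    and "e2 / weight \<le> l1dist {1..R} p' (Unif R) \<Longrightarrow>
      1 - \<delta> \<le> measure_pmf.prob (tester_out T m (embed_on_blocks p')) {False}"
    using good set_pmf_embed_on_blocks[OF p'] unfolding good_tester_def by blast+
qed

end

text \<open>The hypothesis \<open>exists\<close> is needed because \<open>SC\<close> is an infimum of reals and \<open>Inf {}\<close> is
  unspecified.\<close>

lemma SC_le_scaled: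
  assumes "0 < c"
    and exists: "\<exists>m T. 0 \<le> m \<and> good_tester D q e1 e2 \<delta> m T"
    and simulate: "\<And>m T. 0 \<le> m \<Longrightarrow> good_tester D q e1 e2 \<delta> m T \<Longrightarrow>
      \<exists>T'. good_tester D' q' e1' e2' \<delta>' (c * m) T'"
  shows "SC D' q' e1' e2' \<delta>' \<le> c * SC D q e1 e2 \<delta>"
proof -
  define L where "L = {m. 0 \<le> m \<and> (\<exists>T. good_tester D q e1 e2 \<delta> m T)}"
  define L' where "L' = {m. 0 \<le> m \<and> (\<exists>T. good_tester D' q' e1' e2' \<delta>' m T)}"
  have "Inf L' / c \<le> m" if "m \<in> L" for m
  proof -
    have "c * m \<in> L'" using that simulate \<open>0 < c\<close> by (auto simp: L_def L'_def)
    then have "Inf L' \<le> c * m" by (rule cInf_lower) (auto simp: L'_def intro: bdd_belowI[of _ 0])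
    then show ?thesis using \<open>0 < c\<close> by (simp add: field_simps)
  qed
  moreover have "L \<noteq> {}" using exists by (auto simp: L_def)
  ultimately have "Inf L' / c \<le> Inf L" by (intro cInf_greatest)
  then show ?thesis using \<open>0 < c\<close> by (simp add: SC_def L_def L'_def field_simps)
qed

theorem theoremC1:
  fixes q :: "nat pmf" and n :: nat and S :: "nat set"
    and \<epsilon>\<^sub>1 \<epsilon>\<^sub>2 \<delta> :: real
  assumes "set_pmf q \<subseteq> {1..n}"
    and "S \<subseteq> {1..n}" and "S \<noteq> {}"
    and "Rnum q S \<ge> 1"
    and "0 \<le> \<epsilon>\<^sub>1" and "\<epsilon>\<^sub>1 < \<epsilon>\<^sub>2" and "\<delta> > 0"
  shows "SC {1..n} q \<epsilon>\<^sub>1 \<epsilon>\<^sub>2 \<delta> \<ge>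
    4 / qmass q S * SC {1..Rnum q S} (Unif (Rnum q S))
        (4 * \<epsilon>\<^sub>1 / qmass q S) (4 * \<epsilon>\<^sub>2 / qmass q S) \<delta>"
proof -
  interpret block_embedding q "{1..n}" S
    using assms by unfold_locales auto
  have rescale: "e / weight = 4 * e / qmass q S" for e by (simp add: weight_def)
  have "\<exists>m T. 0 \<le> m \<and> good_tester {1..n} q \<epsilon>\<^sub>1 \<epsilon>\<^sub>2 \<delta> m T"
    using assms(2,3,6,7) by (intro good_tester_exists) auto
  then have "SC {1..R} (Unif R) (4 * \<epsilon>\<^sub>1 / qmass q S) (4 * \<epsilon>\<^sub>2 / qmass q S) \<delta> \<le>
      weight * SC {1..n} q \<epsilon>\<^sub>1 \<epsilon>\<^sub>2 \<delta>"
    using good_tester_simulated_tester weight_bounds unfolding rescale by (intro SC_le_scaled) blast+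
  then show ?thesis using qmass_pos by (simp add: weight_def field_simps)
qed

end
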